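(* Let $G$ be a group, $E$ a real Banach space, $f\colon G\to E$ a $(G;E)$-pseudo-Jensen function, and $b\in G$ an element of order two. Then $f(b^{-1}xb)=f(x)$ for all $x\in G$.
   Context: A function $f\colon G\to E$ is $(G;E)$-pseudo-Jensen if there is $c>0$ with $\|f(xy)+f(xy^{-1})-2f(x)\|\le c$ for all $x,y\in G$, and $f(x^n)=nf(x)$ for all $x\in G$, $n\in\mathbb{Z}$. *)

theory Defs
  imports "HOL-Analysis.Analysis" "HOL-Algebra.Algebra"
begin

definition pseudo_Jensen :: "('g, 'm) monoid_scheme \<Rightarrow> ('g \<Rightarrow> 'e::real_normed_vector) \<Rightarrow> bool" where
  "pseudo_Jensen G f \<longleftrightarrow>
     (\<exists>c>0. \<forall>x\<in>carrier G. \<forall>y\<in>carrier G.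
        norm (f (x \<otimes>\<^bsub>G\<^esub> y) + f (x \<otimes>\<^bsub>G\<^esub> inv\<^bsub>G\<^esub> y) - 2 *\<^sub>R f x) \<le> c) \<and>
     (\<forall>x\<in>carrier G. \<forall>n::int. f (x [^]\<^bsub>G\<^esub> n) = of_int n *\<^sub>R f x)"

end

theory Submission
  imports Defs
begin

text \<open>Since \<open>b = b\<inverse>\<close>, the Jensen inequality with \<open>y = b\<close> says that right (and, via
  \<open>f(x\<inverse>) = -f(x)\<close>, left) multiplication by \<open>b\<close> moves \<open>f\<close> by a bounded amount, so
  \<open>f(b\<inverse>xb) - f(x)\<close> is bounded uniformly in \<open>x\<close>. Conjugation by \<open>b\<close> is an endomorphism,
  so homogeneity turns this difference at \<open>x\<^sup>n\<close> into \<open>n\<close> times the difference at \<open>x\<close>;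
  a bounded sequence \<open>n v\<close> forces \<open>v = 0\<close>.\<close>

lemma eq_0_if_multiples_bounded:
  fixes v :: "'a::real_normed_vector"
  assumes "\<And>n::nat. norm (real n *\<^sub>R v) \<le> c"
  shows "v = 0"
proof (rule ccontr)
  assume "v \<noteq> 0"
  obtain n :: nat where "c / norm v < real n"
    using reals_Archimedean2 by blast
  with \<open>v \<noteq> 0\<close> have "c < real n * norm v"
    by (simp add: divide_less_eq)
  with assms[of n] show False
    by simp
qed

context group
begin

lemma conj_hom: "b \<in> carrier G \<Longrightarrow> (\<lambda>x. inv b \<otimes> x \<otimes> b) \<in> hom G G"
  by (rule homI) (simp_all add: m_assoc flip: m_assoc[of b])

lemma pseudo_Jensen_nat_pow:
  "pseudo_Jensen G f \<Longrightarrow> x \<in> carrier G \<Longrightarrow> f (x [^] (n::nat)) = real n *\<^sub>R f x"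
  unfolding pseudo_Jensen_def by (metis int_pow_int of_int_of_nat_eq)

lemma pseudo_Jensen_inv: "pseudo_Jensen G f \<Longrightarrow> x \<in> carrier G \<Longrightarrow> f (inv x) = - f x"
  unfolding pseudo_Jensen_def by (metis int_pow_1 int_pow_neg of_int_minus of_int_1 scaleR_minus1_left)

lemma pseudo_Jensen_bounds:
  assumes "pseudo_Jensen G f"
  obtains c where
    "\<And>x y. x \<in> carrier G \<Longrightarrow> y \<in> carrier G \<Longrightarrow>
       norm (f (x \<otimes> y) + f (x \<otimes> inv y) - 2 *\<^sub>R f x) \<le> c"
    "\<And>x y. x \<in> carrier G \<Longrightarrow> y \<in> carrier G \<Longrightarrow>
       norm (f (y \<otimes> x) + f (inv y \<otimes> x) - 2 *\<^sub>R f x) \<le> c"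
proof -
  from assms obtain c where right: "\<And>x y. x \<in> carrier G \<Longrightarrow> y \<in> carrier G \<Longrightarrow>
      norm (f (x \<otimes> y) + f (x \<otimes> inv y) - 2 *\<^sub>R f x) \<le> c"
    unfolding pseudo_Jensen_def by blast
  moreover have "norm (f (y \<otimes> x) + f (inv y \<otimes> x) - 2 *\<^sub>R f x) \<le> c"
    if x: "x \<in> carrier G" and y: "y \<in> carrier G" for x y
  proof -
    \<comment> \<open>the right inequality at \<open>(x\<inverse>, y\<inverse>)\<close>, rewritten with \<open>f(z\<inverse>) = -f(z)\<close>\<close>
    have "f (inv x \<otimes> inv y) = - f (y \<otimes> x)" "f (inv x \<otimes> inv (inv y)) = - f (inv y \<otimes> x)"
         "f (inv x) = - f x"
      using pseudo_Jensen_inv[OF assms, of "y \<otimes> x"] pseudo_Jensen_inv[OF assms, of "inv y \<otimes> x"]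
        pseudo_Jensen_inv[OF assms, of x] x y
      by (simp_all add: inv_mult_group)
    with right[of "inv x" "inv y"] x y
    have "norm (- (f (y \<otimes> x) + f (inv y \<otimes> x) - 2 *\<^sub>R f x)) \<le> c"
      by (simp add: algebra_simps)
    then show ?thesis
      by (simp only: norm_minus_cancel)
  qed
  ultimately show ?thesis
    using that by blast
qed

lemma pseudo_Jensen_conj_involution_bounded:
  assumes "pseudo_Jensen G f" and b: "b \<in> carrier G" "b \<otimes> b = \<one>"
  obtains c where "\<And>x. x \<in> carrier G \<Longrightarrow> norm (f (inv b \<otimes> x \<otimes> b) - f x) \<le> c"
proof -
  obtain c where
    right: "\<And>x y. x \<in> carrier G \<Longrightarrow> y \<in> carrier G \<Longrightarrow>
       norm (f (x \<otimes> y) + f (x \<otimes> inv y) - 2 *\<^sub>R f x) \<le> c" and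
    left: "\<And>x y. x \<in> carrier G \<Longrightarrow> y \<in> carrier G \<Longrightarrow>
       norm (f (y \<otimes> x) + f (inv y \<otimes> x) - 2 *\<^sub>R f x) \<le> c"
    using pseudo_Jensen_bounds[OF assms(1)] by metis
  have inv_b: "inv b = b"
    using b by (metis inv_equality)
  have "norm (f (inv b \<otimes> x \<otimes> b) - f x) \<le> c" if x: "x \<in> carrier G" for x
  proof -
    have "norm (2 *\<^sub>R (f (b \<otimes> x \<otimes> b) - f (b \<otimes> x))) \<le> c"
      using right[of "b \<otimes> x" b] x b inv_b by (simp add: algebra_simps scaleR_2)
    moreover have "norm (2 *\<^sub>R (f (b \<otimes> x) - f x)) \<le> c"
      using left[of x b] x b inv_b by (simp add: algebra_simps scaleR_2)
    moreover have "norm (f (b \<otimes> x \<otimes> b) - f x)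
        \<le> norm (f (b \<otimes> x \<otimes> b) - f (b \<otimes> x)) + norm (f (b \<otimes> x) - f x)"
      using norm_triangle_ineq[of "f (b \<otimes> x \<otimes> b) - f (b \<otimes> x)" "f (b \<otimes> x) - f x"] by simp
    ultimately show ?thesis
      using inv_b by simp
  qed
  then show ?thesis
    using that by blast
qed

lemma homogeneous_invariant_if_bounded_difference:
  fixes f :: "'a \<Rightarrow> 'e::real_normed_vector"
  assumes homogeneous: "\<And>x n. x \<in> carrier G \<Longrightarrow> f (x [^] (n::nat)) = real n *\<^sub>R f x"
    and \<phi>: "\<phi> \<in> hom G G"
    and bounded: "\<And>x. x \<in> carrier G \<Longrightarrow> norm (f (\<phi> x) - f x) \<le> c"
    and x: "x \<in> carrier G"
  shows "f (\<phi> x) = f x"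
proof -
  have "norm (real n *\<^sub>R (f (\<phi> x) - f x)) \<le> c" for n
  proof -
    have "real n *\<^sub>R (f (\<phi> x) - f x) = f (\<phi> (x [^] n)) - f (x [^] n)"
      using homogeneous x \<phi> is_group
      by (simp add: hom_nat_pow hom_in_carrier scaleR_diff_right)
    then show ?thesis
      using bounded x by simp
  qed
  then show ?thesis
    using eq_0_if_multiples_bounded by fastforce
qed

end

theorem lemma3p13:
  fixes G (structure) and f :: "'g \<Rightarrow> 'e::banach" and b :: 'g
  assumes "group G"
    and "pseudo_Jensen G f"
    and "b \<in> carrier G"
    and "group.ord G b = 2"
  shows "\<forall>x\<in>carrier G. f (inv b \<otimes> x \<otimes> b) = f x"
proof
  interpret group G by (rule assms(1))
  have "b \<otimes> b = \<one>"
    using pow_ord_eq_1[OF assms(3)] assms(4) by (simp add: numeral_2_eq_2 assms(3))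
  then obtain c where "\<And>x. x \<in> carrier G \<Longrightarrow> norm (f (inv b \<otimes> x \<otimes> b) - f x) \<le> c"
    using pseudo_Jensen_conj_involution_bounded assms(2,3) by blast
  then show "f (inv b \<otimes> x \<otimes> b) = f x" if "x \<in> carrier G" for x
    using homogeneous_invariant_if_bounded_difference[OF _ conj_hom[OF assms(3)]]
      pseudo_Jensen_nat_pow[OF assms(2)] that by blast
qed

end
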